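(* For every $k \in \mathbb{N}$ we have $\mathrm{N}(k) = k + \lfloor \log_2(k + 1 + \lfloor \log_2(k+1) \rfloor) \rfloor$.
   Context: The function $\mathrm{N} : \mathbb{N} \to \mathbb{N}$, $\mathbb{N} = \{1,2,\dots\}$, is defined recursively by $\mathrm{N}(1) = 2$ and, for $k \ge 2$, $\mathrm{N}(k) = \max_{i \in \{2,\dots,k\}} \min(2i, \mathrm{N}(k-i+1) + i)$. *)

theory Defs
  imports Complex_Main
begin

text \<open>The value at 0 (outside the paper's domain) is fixed arbitrarily to 0.\<close>

function N :: "nat \<Rightarrow> nat" where
  "N k = (if k = 0 then 0 else if k = 1 then 2
          else Max ((\<lambda>i. min (2 * i) (N (k - i + 1) + i)) ` {2..k}))"
  by pat_completeness auto
termination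
  by (relation "measure id") auto

end

theory Submission
  imports Defs
begin

text \<open>Write \<open>\<ell>(k)\<close> for the largest \<open>d\<close> with \<open>2^d \<le> k + d\<close>, so that
  \<open>2^\<ell> \<le> k + \<ell> < 2^(\<ell>+1) - 1\<close>. By strong induction \<open>N(k) = k + \<ell>(k)\<close>: with
  \<open>j = k - i + 1\<close> the candidate \<open>N(j) + i\<close> equals \<open>k + 1 + \<ell>(j)\<close>, which exceeds
  \<open>k + \<ell>(k)\<close> only if \<open>\<ell>(j) \<ge> \<ell>(k)\<close>; but then \<open>2^\<ell>(k) \<le> j + \<ell>(k)\<close> forces
  \<open>2i \<le> k + \<ell>(k)\<close>. Conversely \<open>i = \<lceil>(k + \<ell>(k))/2\<rceil>\<close> attains the bound. Finally
  \<open>\<lfloor>log\<^sub>2(k+1)\<rfloor>\<close> is \<open>\<ell>(k)\<close> or \<open>\<ell>(k) - 1\<close>, and in both cases \<open>k + 1 + \<lfloor>log\<^sub>2(k+1)\<rfloor>\<close>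
  lies in \<open>[2^\<ell>(k), 2^(\<ell>(k)+1))\<close>.\<close>

declare N.simps [simp del]

lemma N_one: "N 1 = 2"
  by (subst N.simps) simp

lemma N_rec: "k \<ge> 2 \<Longrightarrow> N k = Max ((\<lambda>i. min (2 * i) (N (k - i + 1) + i)) ` {2..k})"
  by (subst N.simps) simp

lemma double_le_two_power: "2 * n \<le> (2::nat) ^ n"
proof (induction n)
  case (Suc n)
  then show ?case
    by (cases n) simp_all
qed simp

lemma two_power_add_le_two_power_add:
  fixes c e :: nat
  assumes "c \<le> e"
  shows "2 ^ c + e \<le> 2 ^ e + c"
  using assms
proof (induction e rule: dec_induct)
  case (step e)
  show ?case
    using step.IH one_le_power[of "2::nat" e] power_Suc[of "2::nat" e] by linarith
qed simp

definition level :: "nat \<Rightarrow> nat" where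
  "level k = Max {d. 2 ^ d \<le> k + d}"

lemma le_level_iff:
  assumes "k \<ge> 1"
  shows "c \<le> level k \<longleftrightarrow> 2 ^ c \<le> k + c"
proof -
  define S where "S = {d. (2::nat) ^ d \<le> k + d}"
  have "S \<subseteq> {..k}"
  proof
    fix d assume "d \<in> S"
    then show "d \<in> {..k}"
      using double_le_two_power[of d] by (simp add: S_def)
  qed
  then have "finite S"
    by (rule finite_subset) simp
  moreover have "0 \<in> S"
    using assms by (simp add: S_def)
  ultimately have level_in: "level k \<in> S" and level_ge: "\<And>d. d \<in> S \<Longrightarrow> d \<le> level k"
    unfolding level_def S_def[symmetric] by (auto intro: Max_in Max_ge)
  show ?thesis
  proof
    assume "c \<le> level k"
    then have "2 ^ c + level k \<le> 2 ^ level k + c"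
      by (rule two_power_add_le_two_power_add)
    with level_in show "2 ^ c \<le> k + c"
      by (simp add: S_def)
  next
    assume "2 ^ c \<le> k + c"
    then show "c \<le> level k"
      by (intro level_ge) (simp add: S_def)
  qed
qed

lemma two_power_level_le: "k \<ge> 1 \<Longrightarrow> 2 ^ level k \<le> k + level k"
  using le_level_iff by blast

lemma less_two_power_Suc_level: "k \<ge> 1 \<Longrightarrow> k + level k + 1 < 2 ^ Suc (level k)"
  using le_level_iff[of k "Suc (level k)"] by simp

lemma level_pos: "k \<ge> 1 \<Longrightarrow> level k \<ge> 1"
  using le_level_iff[of k 1] by simp

lemma level_le: "k \<ge> 1 \<Longrightarrow> level k \<le> k"
  using two_power_level_le[of k] double_le_two_power[of "level k"] by simp

lemma candidate_le_level:
  assumes "1 \<le> i" "i \<le> k"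
  shows "min (2 * i) (k + 1 + level (k + 1 - i)) \<le> k + level k"
proof (cases "level k \<le> level (k + 1 - i)")
  case True
  have "2 ^ level k \<le> (k + 1 - i) + level k"
    using True le_level_iff[of "k + 1 - i"] assms(2) by simp
  moreover have "k + level k + 1 < 2 * 2 ^ level k"
    using less_two_power_Suc_level[of k] assms by simp
  ultimately have "2 * i \<le> k + level k"
    using assms by linarith
  then show ?thesis by simp
qed simp

lemma candidate_attains_level:
  assumes "k \<ge> 2"
  shows "\<exists>i\<in>{2..k}. k + level k \<le> min (2 * i) (k + 1 + level (k + 1 - i))"
proof
  define l where "l = level k"
  define h where "h = (k + l) div 2"
  define i where "i = k + l - h"
  have h: "2 * h \<le> k + l" "k + l \<le> 2 * h + 1"
    unfolding h_def by simp_all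
  have "1 \<le> l" "l \<le> k" "2 ^ l \<le> k + l"
    using level_pos level_le two_power_level_le assms by (simp_all add: l_def)
  then obtain m where m: "l = Suc m"
    using not0_implies_Suc by fastforce
  show i_range: "i \<in> {2..k}"
    using assms h \<open>1 \<le> l\<close> \<open>l \<le> k\<close> unfolding i_def by simp linarith
  have "2 ^ m \<le> h"
    using \<open>2 ^ l \<le> k + l\<close> m unfolding h_def by (simp add: less_eq_div_iff_mult_less_eq)
  moreover have "k + 1 - i + m = h"
    using assms h m \<open>l \<le> k\<close> unfolding i_def by linarith
  moreover have "1 \<le> k + 1 - i"
    using i_range by auto
  ultimately have "m \<le> level (k + 1 - i)"
    using le_level_iff[of "k + 1 - i" m] by simp
  then show "k + level k \<le> min (2 * i) (k + 1 + level (k + 1 - i))"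
    using h m unfolding l_def[symmetric] i_def by simp
qed

theorem N_eq_add_level: "k \<ge> 1 \<Longrightarrow> N k = k + level k"
proof (induction k rule: less_induct)
  case (less k)
  consider "k = 1" | "k \<ge> 2"
    using less.prems by linarith
  then show ?case
  proof cases
    case 1
    have "level 1 = 1"
      using le_level_iff[of 1 1] le_level_iff[of 1 2] by simp
    then show ?thesis
      using 1 N_one by simp
  next
    case 2
    let ?cand = "\<lambda>i. min (2 * i) (k + 1 + level (k + 1 - i))"
    have "(\<lambda>i. min (2 * i) (N (k - i + 1) + i)) ` {2..k} = ?cand ` {2..k}"
    proof (rule image_cong)
      fix i assume "i \<in> {2..k}"
      then have "k + 1 - i < k" "1 \<le> k + 1 - i" "k - i + 1 = k + 1 - i"
        by auto
      then show "min (2 * i) (N (k - i + 1) + i) = ?cand i"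
        using less.IH[of "k + 1 - i"] \<open>i \<in> {2..k}\<close> by simp
    qed simp
    then have "N k = Max (?cand ` {2..k})"
      using N_rec[OF 2] by simp
    also have "\<dots> = k + level k"
    proof -
      have le: "?cand i \<le> k + level k" if "i \<in> {2..k}" for i
        using that by (intro candidate_le_level) simp_all
      obtain i where i: "i \<in> {2..k}" "k + level k \<le> ?cand i"
        using candidate_attains_level[OF 2] by blast
      then have "k + level k = ?cand i"
        using le[OF i(1)] by linarith
      then have "k + level k \<in> ?cand ` {2..k}"
        using i(1) by (rule image_eqI)
      then show ?thesis
        using le by (intro Max_eqI) auto
    qed
    finally show ?thesis .
  qed
qed

lemma floor_log_eq_level:
  assumes "k \<ge> 1"
  shows "\<lfloor>log 2 (real k + 1 + real_of_int \<lfloor>log 2 (real k + 1)\<rfloor>)\<rfloor> = int (level k)"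
proof -
  define l where "l = level k"
  have "1 \<le> l" "2 ^ l \<le> k + l" "k + l + 1 < 2 * 2 ^ l"
    using level_pos two_power_level_le less_two_power_Suc_level assms by (simp_all add: l_def)
  define a where "a = (if 2 ^ l \<le> k + 1 then l else l - 1)"
  have "2 ^ a \<le> k + 1 \<and> k + 1 < 2 ^ (a + 1)"
  proof (cases "2 ^ l \<le> k + 1")
    case False
    obtain m where "l = Suc m"
      using \<open>1 \<le> l\<close> not0_implies_Suc by fastforce
    then have "2 ^ (l - 1) \<le> k + 1"
      using \<open>2 ^ l \<le> k + l\<close> double_le_two_power[of m] by simp
    with False \<open>1 \<le> l\<close> show ?thesis
      by (simp add: a_def)
  qed (use \<open>k + l + 1 < 2 * 2 ^ l\<close> in \<open>simp add: a_def\<close>)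
  then have "\<lfloor>log 2 (real k + 1)\<rfloor> = int a"
    using floor_log_nat_eq_if[of 2 a "k + 1"] by (simp add: ac_simps)
  moreover have "2 ^ l \<le> k + 1 + a \<and> k + 1 + a < 2 ^ (l + 1)"
    using \<open>2 ^ l \<le> k + l\<close> \<open>k + l + 1 < 2 * 2 ^ l\<close> by (auto simp: a_def)
  ultimately show ?thesis
    using floor_log_nat_eq_if[of 2 l "k + 1 + a"] by (simp add: l_def ac_simps)
qed

theorem theorem7p21:
  fixes k :: nat
  assumes "k \<ge> 1"
  shows "int (N k) = int k + \<lfloor>log 2 (real k + 1 + real_of_int \<lfloor>log 2 (real k + 1)\<rfloor>)\<rfloor>"
  using N_eq_add_level[OF assms] floor_log_eq_level[OF assms] by simp

end
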